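(* Let $n\geq 2$. The composite \[ \mathcal{M}_{0,n+1}/\Sigma_n\xrightarrow{\ \phi\ } C_n(\mathbb{C})/(\mathbb{C}\rtimes\mathbb{C}^* )\subseteq \frac{SP^n(\mathbb{C})-\Delta}{\mathbb{C}\rtimes\mathbb{C}^*}\xrightarrow{\ \psi\ }\mathbb{P}(n,n-1,\dots,2) \] is a topological embedding.
   Context: $\mathcal{M}_{0,n+1}$ is the moduli space of $n+1$ distinct labelled points on the Riemann sphere modulo biholomorphisms, identified (by sending the $0$-th point to $\infty$) with $F_n(\mathbb{C})/(\mathbb{C}\rtimes\mathbb{C}^* )$, where $F_n(\mathbb{C})$ is the ordered configuration space of $n$ points in $\mathbb{C}$ and $\mathbb{C}\rtimes\mathbb{C}^*$ acts by $z\mapsto\lambda z+\mu$; $\Sigma_n$ permutes the $n$ points. $C_n(\mathbb{C})$ is the unordered configuration space, $SP^n(\mathbb{C})$ the symmetric power, $\Delta$ its diagonal $\{\{z,\dots,z\}\}$. The map $\phi$ sends the class of $(z_1,\dots,z_n)$ to the class of $\{z_1,\dots,z_n\}$. The map $\psi$ sends the class of $\{z_1,\dots,z_n\}$ to $[a_0:\dots:a_{n-2}]$, where $a_k$ is the coefficient of $z^k$ in $\prod_i(z-z_i+B)$ with $B=(z_1+\dots+z_n)/n$. $\mathbb{P}(n,n-1,\dots,2)=(\mathbb{C}^{n-1}-\{0\})/\sim$ with $(a_0,\dots,a_{n-2})\sim(t^{n}a_0,t^{n-1}a_1,\dots,t^{2}a_{n-2})$, $t\in\mathbb{C}^*$.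 *)

theory Defs
  imports "HOL-Analysis.Analysis" "HOL-Computational_Algebra.Polynomial"
begin

text \<open>Quotient topology of a topological space X by a relation R
  (intended to be an equivalence relation on topspace X): the points are the
  classes, and a set of classes is open iff the union of its members
  (= its preimage under the class map) is open in X.\<close>
definition quotient_topology :: "'a topology \<Rightarrow> ('a \<times> 'a) set \<Rightarrow> 'a set topology" where
  "quotient_topology X R =
     topology (\<lambda>U. U \<subseteq> topspace X // R \<and> openin X (\<Union>U))"

text \<open>Ordered configuration space F_n(C): n distinct points z 0, ..., z (n-1),
  encoded as functions nat => complex vanishing from index n on.\<close>
definition conf :: "nat \<Rightarrow> (nat \<Rightarrow> complex) set" where
  "conf n = {z. (\<forall>k\<ge>n. z k = 0) \<and> inj_on z {..<n}}"

text \<open>Identification by the symmetric group and by C \<rtimes> C^*: z ~ w iff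
  w = lam * (z \<circ> sigma) + mu.\<close>
definition M_rel :: "nat \<Rightarrow> ((nat \<Rightarrow> complex) \<times> (nat \<Rightarrow> complex)) set" where
  "M_rel n = {(z, w). z \<in> conf n \<and> w \<in> conf n \<and>
     (\<exists>\<sigma> lam mu. \<sigma> permutes {..<n} \<and> lam \<noteq> 0 \<and>
        (\<forall>i<n. w i = lam * z (\<sigma> i) + mu))}"

text \<open>The space M_{0,n+1}/Sigma_n (= C_n(C)/(C \<rtimes> C^*)), quotient of the subspace F_n(C).\<close>
definition M_top :: "nat \<Rightarrow> (nat \<Rightarrow> complex) set topology" where
  "M_top n = quotient_topology (subtopology euclidean (conf n)) (M_rel n)"

text \<open>Weighted projective space P(n, n-1, ..., 2): nonzero vectors
  (a 0, ..., a (n-2)) (encoded as functions vanishing from index n-1 on),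
  with a ~ b iff b k = t^(n-k) a k for some t \<noteq> 0.\<close>
definition wp_carrier :: "nat \<Rightarrow> (nat \<Rightarrow> complex) set" where
  "wp_carrier n = {a. (\<forall>k\<ge>n-1. a k = 0) \<and> a \<noteq> (\<lambda>_. 0)}"

definition wp_rel :: "nat \<Rightarrow> ((nat \<Rightarrow> complex) \<times> (nat \<Rightarrow> complex)) set" where
  "wp_rel n = {(a, b). a \<in> wp_carrier n \<and> b \<in> wp_carrier n \<and>
     (\<exists>t. t \<noteq> 0 \<and> (\<forall>k<n-1. b k = t ^ (n - k) * a k))}"

definition wp_top :: "nat \<Rightarrow> (nat \<Rightarrow> complex) set topology" where
  "wp_top n = quotient_topology (subtopology euclidean (wp_carrier n)) (wp_rel n)"

definition psi_vec :: "nat \<Rightarrow> (nat \<Rightarrow> complex) \<Rightarrow> (nat \<Rightarrow> complex)" where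
  "psi_vec n z = (\<lambda>k. if k < n - 1 then
      coeff (\<Prod>i<n. [: (\<Sum>j<n. z j) / of_nat n - z i, 1 :]) k else 0)"

definition psi_phi :: "nat \<Rightarrow> (nat \<Rightarrow> complex) set \<Rightarrow> (nat \<Rightarrow> complex) set" where
  "psi_phi n C = wp_rel n `` {psi_vec n (SOME z. z \<in> C)}"

end

theory Submission
  imports Defs
begin

text \<open>The map is induced by \<open>psi_vec\<close>, the coefficients of the centred polynomial
  \<open>\<Prod>i. X - (z i - B)\<close>. Applying \<open>z \<mapsto> \<lambda> z + \<mu>\<close> (and a permutation) multiplies
  its \<open>k\<close>-th coefficient by \<open>\<lambda>^(n-k)\<close>; conversely, since the polynomial is monic with vanishing
  coefficient of \<open>X^(n-1)\<close>, proportional coefficient vectors force the centred roots to agree up to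
  such a scaling. Hence the induced map on quotients is a continuous injection. For openness, a
  saturated open set \<open>U\<close> of configurations is the preimage of the complement of the
  \<open>\<complex>\<^sup>*\<close>-saturation of the image of \<open>K - U\<close>, where \<open>K\<close> is the compact set of centred
  point tuples of unit norm, collisions allowed. That saturation is closed because normalising with
  the weighted norm \<open>\<Sum>k. |a k|^(1/(n-k))\<close> turns it into the preimage of a compact set.\<close>

section \<open>Quotient topologies and induced maps\<close>

lemma class_eq_if_in_quotient:
  assumes "equiv A R" "C \<in> A // R" "x \<in> C"
  shows "C = R `` {x}"
  using assms by (metis Image_singleton_iff equiv_class_eq quotientE)

lemma istopology_quotient:
  assumes "equiv (topspace X) R"
  shows "istopology (\<lambda>U. U \<subseteq> topspace X // R \<and> openin X (\<Union>U))"
  unfolding istopology_def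
proof (rule conjI; intro allI impI)
  fix S T
  assume S: "S \<subseteq> topspace X // R \<and> openin X (\<Union>S)" and T: "T \<subseteq> topspace X // R \<and> openin X (\<Union>T)"
  have "\<Union>(S \<inter> T) = \<Union>S \<inter> \<Union>T"
    using quotient_disj[OF assms] S T by blast
  then show "S \<inter> T \<subseteq> topspace X // R \<and> openin X (\<Union>(S \<inter> T))"
    using S T by auto
next
  fix K
  assume "\<forall>U\<in>K. U \<subseteq> topspace X // R \<and> openin X (\<Union>U)"
  moreover have "\<Union>(\<Union>K) = (\<Union>U\<in>K. \<Union>U)" by auto
  ultimately show "\<Union>K \<subseteq> topspace X // R \<and> openin X (\<Union>(\<Union>K))" by auto
qed

lemma openin_quotient_topology:
  assumes "equiv (topspace X) R"
  shows "openin (quotient_topology X R) U \<longleftrightarrow> U \<subseteq> topspace X // R \<and> openin X (\<Union>U)"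
  unfolding quotient_topology_def using istopology_quotient[OF assms] by simp

lemma topspace_quotient_topology:
  assumes "equiv (topspace X) R"
  shows "topspace (quotient_topology X R) = topspace X // R"
proof (rule subset_antisym)
  show "topspace (quotient_topology X R) \<subseteq> topspace X // R"
    using openin_quotient_topology[OF assms] openin_topspace by blast
  have "openin (quotient_topology X R) (topspace X // R)"
    using openin_quotient_topology[OF assms] Union_quotient[OF assms] by simp
  then show "topspace X // R \<subseteq> topspace (quotient_topology X R)"
    by (rule openin_subset)
qed

lemma quotient_map_quotient_topology:
  assumes "equiv (topspace X) R"
  shows "quotient_map X (quotient_topology X R) (\<lambda>x. R `` {x})"
  unfolding quotient_map_def topspace_quotient_topology[OF assms]
proof (intro conjI allI impI)
  show "(\<lambda>x. R `` {x}) ` topspace X = topspace X // R"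
    by (auto simp: quotient_def)
  fix U
  assume "U \<subseteq> topspace X // R"
  then have "{x \<in> topspace X. R `` {x} \<in> U} = \<Union>U"
    using class_eq_if_in_quotient[OF assms] equiv_class_self[OF assms] Union_quotient[OF assms]
    by blast
  then show "openin X {x \<in> topspace X. R `` {x} \<in> U} \<longleftrightarrow> openin (quotient_topology X R) U"
    using \<open>U \<subseteq> topspace X // R\<close> openin_quotient_topology[OF assms] by simp
qed

definition quotient_induced :: "('a \<Rightarrow> 'b) \<Rightarrow> ('b \<times> 'b) set \<Rightarrow> 'a set \<Rightarrow> 'b set" where
  "quotient_induced f S C = S `` {f (SOME x. x \<in> C)}"

locale compatible_map =
  fixes X :: "'a topology" and R :: "('a \<times> 'a) set"
    and Y :: "'b topology" and S :: "('b \<times> 'b) set" and f :: "'a \<Rightarrow> 'b"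
  assumes equiv_X: "equiv (topspace X) R"
    and equiv_Y: "equiv (topspace Y) S"
    and continuous: "continuous_map X Y f"
    and reflects: "\<And>x x'. x \<in> topspace X \<Longrightarrow> x' \<in> topspace X \<Longrightarrow> (f x, f x') \<in> S \<longleftrightarrow> (x, x') \<in> R"
begin

abbreviation "g \<equiv> quotient_induced f S"

lemma induced_class:
  assumes "x \<in> topspace X"
  shows "g (R `` {x}) = S `` {f x}"
proof -
  define y where "y = (SOME y. y \<in> R `` {x})"
  have "(x, y) \<in> R"
    unfolding y_def using someI[of "\<lambda>y. y \<in> R `` {x}", OF equiv_class_self[OF equiv_X assms]] by simp
  then have "(f x, f y) \<in> S"
    using reflects[OF assms] equiv_type[OF equiv_X] by blast
  then show ?thesis
    unfolding quotient_induced_def y_def[symmetric] by (simp add: equiv_class_eq[OF equiv_Y])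
qed

lemma continuous_map_induced:
  "continuous_map (quotient_topology X R) (quotient_topology Y S) g"
proof (rule continuous_compose_quotient_map[OF quotient_map_quotient_topology[OF equiv_X]])
  have "continuous_map X (quotient_topology Y S) ((\<lambda>y. S `` {y}) \<circ> f)"
    using continuous quotient_imp_continuous_map[OF quotient_map_quotient_topology[OF equiv_Y]]
    by (rule continuous_map_compose)
  then show "continuous_map X (quotient_topology Y S) (g \<circ> (\<lambda>x. R `` {x}))"
    by (rule continuous_map_eq) (simp add: induced_class)
qed

lemma inj_on_induced: "inj_on g (topspace (quotient_topology X R))"
proof (rule inj_onI)
  fix C C'
  assume "C \<in> topspace (quotient_topology X R)" "C' \<in> topspace (quotient_topology X R)" "g C = g C'"
  then obtain x x' where x: "x \<in> topspace X" "C = R `` {x}" and x': "x' \<in> topspace X" "C' = R `` {x'}"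
    and "S `` {f x} = S `` {f x'}"
    unfolding topspace_quotient_topology[OF equiv_X] by (auto elim!: quotientE simp: induced_class)
  then have "(f x, f x') \<in> S"
    using continuous eq_equiv_class[OF _ equiv_Y] by (metis continuous_map_def PiE)
  then show "C = C'"
    using x x' reflects equiv_class_eq[OF equiv_X] by metis
qed

lemma open_map_induced:
  assumes separates: "\<And>U. openin X U \<Longrightarrow> R `` U \<subseteq> U \<Longrightarrow>
      \<exists>W. openin Y W \<and> S `` W \<subseteq> W \<and> {x \<in> topspace X. f x \<in> W} = U"
  shows "open_map (quotient_topology X R)
      (subtopology (quotient_topology Y S) (g ` topspace (quotient_topology X R))) g"
  unfolding open_map_def openin_subtopology
proof (intro allI impI)
  fix \<U>
  assume "openin (quotient_topology X R) \<U>"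
  then have \<U>: "\<U> \<subseteq> topspace X // R" "openin X (\<Union>\<U>)"
    using openin_quotient_topology[OF equiv_X] by auto
  have class_in_\<U>: "R `` {x} \<in> \<U> \<longleftrightarrow> x \<in> \<Union>\<U>" if "x \<in> topspace X" for x
    using \<U>(1) class_eq_if_in_quotient[OF equiv_X] equiv_class_self[OF equiv_X that] by blast
  have saturated: "R `` \<Union>\<U> \<subseteq> \<Union>\<U>"
  proof
    fix x'
    assume "x' \<in> R `` \<Union>\<U>"
    then obtain x where "x \<in> \<Union>\<U>" "(x, x') \<in> R" by blast
    then show "x' \<in> \<Union>\<U>"
      using class_in_\<U> equiv_class_eq[OF equiv_X] equiv_type[OF equiv_X] by blast
  qed
  obtain W where W: "openin Y W" "S `` W \<subseteq> W" "{x \<in> topspace X. f x \<in> W} = \<Union>\<U>"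
    using separates[OF \<U>(2) saturated] by meson
  have class_in_W: "S `` {y} \<in> (\<lambda>w. S `` {w}) ` W \<longleftrightarrow> y \<in> W" if "y \<in> topspace Y" for y
  proof
    assume "S `` {y} \<in> (\<lambda>w. S `` {w}) ` W"
    then obtain w where "w \<in> W" and "S `` {w} = S `` {y}" by auto
    from this(2) have "(w, y) \<in> S" by (rule eq_equiv_class[OF _ equiv_Y that])
    then show "y \<in> W" using W(2) \<open>w \<in> W\<close> by blast
  qed (rule imageI)
  have "{y \<in> topspace Y. S `` {y} \<in> (\<lambda>w. S `` {w}) ` W} \<subseteq> W"
    using class_in_W by blast
  then have "openin (quotient_topology Y S) ((\<lambda>w. S `` {w}) ` W)"
    using quotient_map_quotient_topology[OF equiv_Y] W(1)
    unfolding quotient_map_saturated_open by blast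
  moreover have "g ` \<U> = (\<lambda>w. S `` {w}) ` W \<inter> g ` topspace (quotient_topology X R)"
  proof -
    have "g C \<in> (\<lambda>w. S `` {w}) ` W \<longleftrightarrow> C \<in> \<U>" if C: "C \<in> topspace X // R" for C
    proof -
      obtain x where x: "x \<in> topspace X" "C = R `` {x}"
        using C by (auto elim: quotientE)
      then have "f x \<in> topspace Y"
        using continuous by (auto simp: continuous_map_def)
      then show ?thesis
        using class_in_W class_in_\<U> x W(3) induced_class by auto
    qed
    then show ?thesis
      using \<U>(1) unfolding topspace_quotient_topology[OF equiv_X] by blast
  qed
  ultimately show "\<exists>T. openin (quotient_topology Y S) T \<and> g ` \<U> = T \<inter> g ` topspace (quotient_topology X R)"
    by blast
qed

lemma embedding_map_induced:
  assumes "\<And>U. openin X U \<Longrightarrow> R `` U \<subseteq> U \<Longrightarrow>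
      \<exists>W. openin Y W \<and> S `` W \<subseteq> W \<and> {x \<in> topspace X. f x \<in> W} = U"
  shows "embedding_map (quotient_topology X R) (quotient_topology Y S) g"
  unfolding embedding_map_def
proof (rule bijective_open_imp_homeomorphic_map)
  have "g ` topspace (quotient_topology X R) \<subseteq> topspace (quotient_topology Y S)"
    by (rule continuous_map_image_subset_topspace[OF continuous_map_induced])
  then show "continuous_map (quotient_topology X R)
      (subtopology (quotient_topology Y S) (g ` topspace (quotient_topology X R))) g"
    and "g ` topspace (quotient_topology X R) =
      topspace (subtopology (quotient_topology Y S) (g ` topspace (quotient_topology X R)))"
    using continuous_map_induced by (auto simp: continuous_map_in_subtopology)
qed (use inj_on_induced open_map_induced[OF assms] in auto)

end

section \<open>Products of monic linear polynomials\<close>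

lemma coeff_monic_linear_mult:
  fixes p :: "'a::comm_ring_1 poly"
  shows "coeff ([:c, 1:] * p) k = c * coeff p k + (if k = 0 then 0 else coeff p (k - 1))"
  by (cases k) (auto simp: coeff_pCons)

lemma coeff_prod_monic_linear_ge:
  fixes c :: "'a \<Rightarrow> 'b::comm_ring_1"
  assumes "finite A" "card A \<le> k"
  shows "coeff (\<Prod>i\<in>A. [:c i, 1:]) k = (if k = card A then 1 else 0)"
  using assms
proof (induction A arbitrary: k rule: finite_induct)
  case empty
  then show ?case by (cases k) auto
next
  case (insert a A)
  then show ?case
    by (auto simp del: mult_pCons_left simp add: coeff_monic_linear_mult)
qed

lemma coeff_prod_monic_linear_subleading:
  fixes c :: "'a \<Rightarrow> 'b::comm_ring_1"
  assumes "finite A" "A \<noteq> {}"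
  shows "coeff (\<Prod>i\<in>A. [:c i, 1:]) (card A - 1) = (\<Sum>i\<in>A. c i)"
  using assms
proof (induction A rule: finite_ne_induct)
  case (singleton x)
  then show ?case by simp
next
  case (insert a A)
  then have "card A \<noteq> 0" by auto
  with insert show ?case
    by (simp del: mult_pCons_left add: coeff_monic_linear_mult coeff_prod_monic_linear_ge)
qed

lemma coeff_prod_monic_linear_scale:
  fixes c :: "'a \<Rightarrow> 'b::comm_ring_1"
  assumes "finite A"
  shows "coeff (\<Prod>i\<in>A. [:l * c i, 1:]) k = l ^ (card A - k) * coeff (\<Prod>i\<in>A. [:c i, 1:]) k"
  using assms
proof (induction A arbitrary: k rule: finite_induct)
  case empty
  then show ?case by (cases k) auto
next
  case (insert a A)
  show ?case
  proof (cases "k \<le> card A")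
    case True
    then have "l ^ (Suc (card A) - k) = l * l ^ (card A - k)"
      and "k \<noteq> 0 \<Longrightarrow> card A - (k - 1) = Suc (card A) - k"
      by (simp_all add: Suc_diff_le)
    with insert show ?thesis
      by (simp del: mult_pCons_left add: coeff_monic_linear_mult algebra_simps)
  next
    case False
    with insert.hyps have "card (insert a A) \<le> k" by simp
    with insert.hyps show ?thesis
      using coeff_prod_monic_linear_ge[of "insert a A" k c]
        coeff_prod_monic_linear_ge[of "insert a A" k "\<lambda>i. l * c i"] by simp
  qed
qed

section \<open>The centred polynomial\<close>

definition barycenter :: "nat \<Rightarrow> (nat \<Rightarrow> complex) \<Rightarrow> complex" where
  "barycenter n z = (\<Sum>j<n. z j) / of_nat n"

definition centered_poly :: "nat \<Rightarrow> (nat \<Rightarrow> complex) \<Rightarrow> complex poly" where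
  "centered_poly n z = (\<Prod>i<n. [:barycenter n z - z i, 1:])"

definition wp_scale :: "nat \<Rightarrow> complex \<Rightarrow> (nat \<Rightarrow> complex) \<Rightarrow> nat \<Rightarrow> complex" where
  "wp_scale n t a = (\<lambda>k. if k < n - 1 then t ^ (n - k) * a k else 0)"

lemma psi_vec_eq_coeff_centered_poly:
  "psi_vec n z = (\<lambda>k. if k < n - 1 then coeff (centered_poly n z) k else 0)"
  unfolding psi_vec_def centered_poly_def barycenter_def by simp

lemma sum_barycenter_diff: "n > 0 \<Longrightarrow> (\<Sum>i<n. barycenter n z - z i) = 0"
  by (simp add: sum_subtractf barycenter_def)

lemma coeff_centered_poly_subleading:
  assumes "n > 0"
  shows "coeff (centered_poly n z) (n - 1) = 0"
proof -
  have "{..<n} \<noteq> {}" using assms by auto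
  then show ?thesis
    using coeff_prod_monic_linear_subleading[of "{..<n}" "\<lambda>i. barycenter n z - z i"]
    by (simp add: centered_poly_def sum_barycenter_diff[OF assms])
qed

lemma coeff_centered_poly_ge: "n \<le> k \<Longrightarrow> coeff (centered_poly n z) k = (if k = n then 1 else 0)"
  unfolding centered_poly_def using coeff_prod_monic_linear_ge[of "{..<n}" k "\<lambda>i. barycenter n z - z i"] by simp

lemma barycenter_affine:
  assumes "n > 0" "\<sigma> permutes {..<n}" "\<And>i. i < n \<Longrightarrow> w i = l * z (\<sigma> i) + m"
  shows "barycenter n w = l * barycenter n z + m"
proof -
  have "(\<Sum>j<n. w j) = l * (\<Sum>j<n. z (\<sigma> j)) + of_nat n * m"
    using assms(3) by (simp add: sum.distrib sum_distrib_left)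
  also have "(\<Sum>j<n. z (\<sigma> j)) = (\<Sum>j<n. z j)"
    using sum.permute[OF assms(2), of z] by (simp add: comp_def)
  finally show ?thesis
    using assms(1) unfolding barycenter_def by (simp add: field_simps)
qed

lemma psi_vec_affine:
  assumes "n > 0" "\<sigma> permutes {..<n}" "\<And>i. i < n \<Longrightarrow> w i = l * z (\<sigma> i) + m"
  shows "psi_vec n w = wp_scale n l (psi_vec n z)"
proof -
  have "centered_poly n w = (\<Prod>i<n. [:l * (barycenter n z - z (\<sigma> i)), 1:])"
    unfolding centered_poly_def using assms(3) barycenter_affine[of n \<sigma> w l z m, OF assms]
    by (intro prod.cong) (auto simp: algebra_simps)
  also have "\<dots> = (\<Prod>i<n. [:l * (barycenter n z - z i), 1:])"
    using prod.permute[OF assms(2), of "\<lambda>i. [:l * (barycenter n z - z i), 1:]"] by (simp add: comp_def)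
  finally show ?thesis
    using coeff_prod_monic_linear_scale[of "{..<n}" l "\<lambda>i. barycenter n z - z i"]
    by (simp add: psi_vec_eq_coeff_centered_poly wp_scale_def centered_poly_def fun_eq_iff)
qed

lemma centered_poly_eq_scaled:
  assumes "n > 0" "\<And>k. k < n - 1 \<Longrightarrow> psi_vec n w k = t ^ (n - k) * psi_vec n z k"
  shows "centered_poly n w = (\<Prod>j<n. [:t * (barycenter n z - z j), 1:])"
proof (rule poly_eqI)
  fix k
  have scaled: "coeff (\<Prod>j<n. [:t * (barycenter n z - z j), 1:]) k = t ^ (n - k) * coeff (centered_poly n z) k"
    using coeff_prod_monic_linear_scale[of "{..<n}" t "\<lambda>j. barycenter n z - z j" k]
    by (simp add: centered_poly_def)
  consider "k < n - 1" | "k = n - 1" | "n \<le> k" by linarith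
  then show "coeff (centered_poly n w) k = coeff (\<Prod>j<n. [:t * (barycenter n z - z j), 1:]) k"
  proof cases
    case 1
    then show ?thesis using assms(2)[OF 1] scaled by (simp add: psi_vec_eq_coeff_centered_poly)
  next
    case 2
    then show ?thesis using scaled coeff_centered_poly_subleading[OF assms(1)] by simp
  next
    case 3
    then show ?thesis using scaled coeff_centered_poly_ge[OF 3] by simp
  qed
qed

text \<open>No hypothesis \<open>t \<noteq> 0\<close>: the case \<open>t = 0\<close> shows that \<open>psi_vec\<close> vanishes only when all
  points coincide.\<close>
lemma centered_points_scaled:
  assumes "n > 0" "\<And>k. k < n - 1 \<Longrightarrow> psi_vec n w k = t ^ (n - k) * psi_vec n z k" "i < n"
  shows "\<exists>j<n. w i - barycenter n w = t * (z j - barycenter n z)"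
proof -
  have "poly (centered_poly n w) (w i - barycenter n w) = 0"
    unfolding centered_poly_def poly_prod using assms(3) by (auto intro!: bexI[of _ i])
  then have "poly (\<Prod>j<n. [:t * (barycenter n z - z j), 1:]) (w i - barycenter n w) = 0"
    using centered_poly_eq_scaled[of n w t z, OF assms(1,2)] by simp
  then obtain j where "j < n" "t * (barycenter n z - z j) + (w i - barycenter n w) = 0"
    by (auto simp: poly_prod)
  then show ?thesis
    by (auto simp: algebra_simps)
qed

lemma psi_vec_in_wp_carrier:
  assumes "n > 0" "i < n" "z i \<noteq> barycenter n z"
  shows "psi_vec n z \<in> wp_carrier n"
proof -
  have "\<exists>k<n - 1. psi_vec n z k \<noteq> 0"
  proof (rule ccontr)
    assume "\<not> (\<exists>k<n - 1. psi_vec n z k \<noteq> 0)"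
    then have "\<And>k. k < n - 1 \<Longrightarrow> psi_vec n z k = 0 ^ (n - k) * psi_vec n z k"
      by simp
    then show False
      using centered_points_scaled[of n z 0 z i] assms by simp
  qed
  then have "psi_vec n z \<noteq> (\<lambda>_. 0)"
    by auto
  moreover have "\<forall>k\<ge>n - 1. psi_vec n z k = 0"
    by (simp add: psi_vec_def)
  ultimately show ?thesis
    unfolding wp_carrier_def by simp
qed

section \<open>The two equivalence relations\<close>

lemma wp_scale_mult: "wp_scale n s (wp_scale n t a) = wp_scale n (s * t) a"
  by (auto simp: wp_scale_def power_mult_distrib fun_eq_iff)

lemma wp_scale_one: "a \<in> wp_carrier n \<Longrightarrow> wp_scale n 1 a = a"
  by (auto simp: wp_scale_def wp_carrier_def fun_eq_iff)

lemma wp_scale_in_wp_carrier: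
  assumes "a \<in> wp_carrier n" "t \<noteq> 0"
  shows "wp_scale n t a \<in> wp_carrier n"
proof -
  obtain k where "a k \<noteq> 0"
    using assms(1) by (auto simp: wp_carrier_def)
  with assms have "wp_scale n t a k \<noteq> 0"
    by (auto simp: wp_scale_def wp_carrier_def)
  then have "wp_scale n t a \<noteq> (\<lambda>_. 0)"
    by metis
  then show ?thesis
    by (auto simp: wp_carrier_def wp_scale_def)
qed

lemma wp_rel_iff_scale:
  "(a, b) \<in> wp_rel n \<longleftrightarrow> a \<in> wp_carrier n \<and> (\<exists>t. t \<noteq> 0 \<and> b = wp_scale n t a)"
proof
  assume "(a, b) \<in> wp_rel n"
  then obtain t where "a \<in> wp_carrier n" "b \<in> wp_carrier n" "t \<noteq> 0" "\<forall>k<n - 1. b k = t ^ (n - k) * a k"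
    by (auto simp: wp_rel_def)
  then show "a \<in> wp_carrier n \<and> (\<exists>t. t \<noteq> 0 \<and> b = wp_scale n t a)"
    by (auto simp: wp_scale_def wp_carrier_def fun_eq_iff)
next
  assume "a \<in> wp_carrier n \<and> (\<exists>t. t \<noteq> 0 \<and> b = wp_scale n t a)"
  then show "(a, b) \<in> wp_rel n"
    using wp_scale_in_wp_carrier by (auto simp: wp_rel_def wp_scale_def)
qed

lemma equiv_wp_rel: "equiv (wp_carrier n) (wp_rel n)"
proof (rule equivI)
  show "wp_rel n \<subseteq> wp_carrier n \<times> wp_carrier n"
    by (auto simp: wp_rel_def)
  show "refl_on (wp_carrier n) (wp_rel n)"
    unfolding refl_on_def wp_rel_def by (auto intro!: exI[of _ 1])
  show "sym (wp_rel n)"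
  proof (rule symI)
    fix a b
    assume "(a, b) \<in> wp_rel n"
    then obtain t where a: "a \<in> wp_carrier n" and t: "t \<noteq> 0" and b: "b = wp_scale n t a"
      unfolding wp_rel_iff_scale by blast
    have "b \<in> wp_carrier n" "1 / t \<noteq> 0" "a = wp_scale n (1 / t) b"
      using wp_scale_in_wp_carrier[OF a t] t by (simp_all add: b wp_scale_mult wp_scale_one[OF a])
    then show "(b, a) \<in> wp_rel n"
      unfolding wp_rel_iff_scale by blast
  qed
  show "trans (wp_rel n)"
  proof (rule transI)
    fix a b c
    assume "(a, b) \<in> wp_rel n" "(b, c) \<in> wp_rel n"
    then obtain s t where "a \<in> wp_carrier n" "t \<noteq> 0" "s \<noteq> 0" "c = wp_scale n s (wp_scale n t a)"
      unfolding wp_rel_iff_scale by blast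
    moreover have "s * t \<noteq> 0"
      using calculation by simp
    ultimately show "(a, c) \<in> wp_rel n"
      unfolding wp_rel_iff_scale wp_scale_mult by blast
  qed
qed

lemma M_relI:
  assumes "z \<in> conf n" "w \<in> conf n" "\<sigma> permutes {..<n}" "l \<noteq> 0"
    "\<And>i. i < n \<Longrightarrow> w i = l * z (\<sigma> i) + m"
  shows "(z, w) \<in> M_rel n"
proof -
  have "\<exists>\<sigma> l m. \<sigma> permutes {..<n} \<and> l \<noteq> 0 \<and> (\<forall>i<n. w i = l * z (\<sigma> i) + m)"
    using assms(3-5) by blast
  with assms(1,2) show ?thesis
    by (simp add: M_rel_def)
qed

lemma M_relE:
  assumes "(z, w) \<in> M_rel n"
  obtains \<sigma> l m where "z \<in> conf n" "w \<in> conf n" "\<sigma> permutes {..<n}" "l \<noteq> 0"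
    "\<And>i. i < n \<Longrightarrow> w i = l * z (\<sigma> i) + m"
  using assms by (auto simp: M_rel_def)

lemma equiv_M_rel: "equiv (conf n) (M_rel n)"
proof (rule equivI)
  show "M_rel n \<subseteq> conf n \<times> conf n"
    by (auto elim: M_relE)
  show "refl_on (conf n) (M_rel n)"
    unfolding refl_on_def by (auto intro: M_relI[where \<sigma> = id and l = 1 and m = 0])
  show "sym (M_rel n)"
  proof (rule symI)
    fix z w
    assume "(z, w) \<in> M_rel n"
    then obtain \<sigma> l m where zw: "z \<in> conf n" "w \<in> conf n" "\<sigma> permutes {..<n}" "l \<noteq> 0"
      "\<And>i. i < n \<Longrightarrow> w i = l * z (\<sigma> i) + m"
      by (auto elim: M_relE)
    have "z i = (1 / l) * w (inv \<sigma> i) + (- m / l)" if "i < n" for i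
    proof -
      have "inv \<sigma> i < n" "\<sigma> (inv \<sigma> i) = i"
        using that permutes_in_image[OF permutes_inv[OF zw(3)]] permutes_inverses(1)[OF zw(3)] by auto
      then show ?thesis
        using zw(4,5) by (force simp: field_simps)
    qed
    then show "(w, z) \<in> M_rel n"
      using zw(1-4) permutes_inv[OF zw(3)] by (intro M_relI[where \<sigma> = "inv \<sigma>" and l = "1 / l" and m = "- m / l"]) auto
  qed
  show "trans (M_rel n)"
  proof (rule transI)
    fix z w x
    assume "(z, w) \<in> M_rel n" "(w, x) \<in> M_rel n"
    obtain \<sigma> l m where zw: "z \<in> conf n" "\<sigma> permutes {..<n}" "l \<noteq> 0"
      "\<And>i. i < n \<Longrightarrow> w i = l * z (\<sigma> i) + m"
      using \<open>(z, w) \<in> M_rel n\<close> by (auto elim: M_relE)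
    obtain \<tau> l' m' where wx: "x \<in> conf n" "\<tau> permutes {..<n}" "l' \<noteq> 0"
      "\<And>i. i < n \<Longrightarrow> x i = l' * w (\<tau> i) + m'"
      using \<open>(w, x) \<in> M_rel n\<close> by (auto elim: M_relE)
    have x: "x i = (l' * l) * z ((\<sigma> \<circ> \<tau>) i) + (l' * m + m')" if "i < n" for i
      using zw(4) wx(4) permutes_in_image[OF wx(2)] that by (simp add: algebra_simps)
    show "(z, x) \<in> M_rel n"
      using zw(1,3) wx(1,3) permutes_compose[OF wx(2) zw(2)] x
      by (intro M_relI[where \<sigma> = "\<sigma> \<circ> \<tau>" and l = "l' * l" and m = "l' * m + m'"]) auto
  qed
qed

lemma conf_nonconstant:
  assumes "n \<ge> 2" "z \<in> conf n"
  obtains i where "i < n" "z i \<noteq> barycenter n z"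
proof -
  have "z 0 \<noteq> z 1"
    using assms by (auto simp: conf_def dest: inj_onD)
  then show ?thesis
    using that assms(1) by (metis One_nat_def less_2_cases_iff less_le_trans)
qed

lemma psi_vec_conf_in_wp_carrier: "n \<ge> 2 \<Longrightarrow> z \<in> conf n \<Longrightarrow> psi_vec n z \<in> wp_carrier n"
  by (metis conf_nonconstant psi_vec_in_wp_carrier gr0I not_less0)

lemma wp_rel_psi_vec_if_M_rel:
  assumes "n \<ge> 2" "(z, w) \<in> M_rel n"
  shows "(psi_vec n z, psi_vec n w) \<in> wp_rel n"
proof -
  obtain \<sigma> l m where "z \<in> conf n" "\<sigma> permutes {..<n}" "l \<noteq> 0" "\<And>i. i < n \<Longrightarrow> w i = l * z (\<sigma> i) + m"
    using assms(2) by (auto elim: M_relE)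
  with assms(1) show ?thesis
    using psi_vec_affine[of n \<sigma> w l z m] psi_vec_conf_in_wp_carrier by (auto simp: wp_rel_iff_scale)
qed

lemma M_rel_if_centered_points_scaled:
  assumes "\<And>k. n \<le> k \<Longrightarrow> z k = 0" "w \<in> conf n" "t \<noteq> 0"
    and scaled: "\<And>i. i < n \<Longrightarrow> \<exists>j<n. w i - barycenter n w = t * (z j - barycenter n z)"
  shows "(z, w) \<in> M_rel n"
proof -
  define \<sigma> where "\<sigma> i = (if i < n then (SOME j. j < n \<and> w i - barycenter n w = t * (z j - barycenter n z)) else i)" for i
  have \<sigma>: "\<sigma> i < n" "w i = t * z (\<sigma> i) + (barycenter n w - t * barycenter n z)" if "i < n" for i
    using someI_ex[OF scaled[OF that]] that by (auto simp: \<sigma>_def algebra_simps)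
  have inj_w: "inj_on w {..<n}"
    using assms(2) by (simp add: conf_def)
  have "inj_on \<sigma> {..<n}"
  proof (rule inj_onI)
    fix i j
    assume "i \<in> {..<n}" "j \<in> {..<n}" "\<sigma> i = \<sigma> j"
    then have "w i = w j"
      using \<sigma>(2) by simp
    with inj_w \<open>i \<in> {..<n}\<close> \<open>j \<in> {..<n}\<close> show "i = j"
      by (simp add: inj_on_eq_iff)
  qed
  then have image: "\<sigma> ` {..<n} = {..<n}"
    using endo_inj_surj[of "{..<n}" \<sigma>] \<sigma>(1) by auto
  then have perm: "\<sigma> permutes {..<n}"
    using \<open>inj_on \<sigma> {..<n}\<close> by (intro bij_imp_permutes) (auto simp: bij_betw_def \<sigma>_def)
  have "inj_on z {..<n}"
  proof (rule inj_onI)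
    fix a b
    assume "a \<in> {..<n}" "b \<in> {..<n}" "z a = z b"
    moreover obtain i j where "i < n" "a = \<sigma> i" "j < n" "b = \<sigma> j"
      using image \<open>a \<in> {..<n}\<close> \<open>b \<in> {..<n}\<close> by (metis imageE lessThan_iff)
    ultimately show "a = b"
      using \<sigma>(2) inj_w by (metis inj_onD lessThan_iff)
  qed
  then have "z \<in> conf n"
    using assms(1) by (simp add: conf_def)
  then show ?thesis
    by (rule M_relI[OF _ assms(2) perm assms(3) \<sigma>(2)])
qed

lemma M_rel_if_wp_rel_psi_vec:
  assumes "n \<ge> 2" "\<And>k. n \<le> k \<Longrightarrow> z k = 0" "w \<in> conf n" "(psi_vec n z, psi_vec n w) \<in> wp_rel n"
  shows "(z, w) \<in> M_rel n"
proof -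
  obtain t where "t \<noteq> 0" "\<And>k. k < n - 1 \<Longrightarrow> psi_vec n w k = t ^ (n - k) * psi_vec n z k"
    using assms(4) by (auto simp: wp_rel_def)
  with assms show ?thesis
    using M_rel_if_centered_points_scaled[of n z w t] centered_points_scaled[of n w t z] by auto
qed

section \<open>Continuity and the weighted norm\<close>

lemma continuous_on_coordinate [continuous_intros]:
  "continuous_on S (\<lambda>z::'a \<Rightarrow> 'b::topological_space. z i)"
  by (rule continuous_on_subset[OF continuous_on_product_coordinates]) simp

lemma continuous_on_coeff_prod_monic_linear:
  fixes c :: "'i \<Rightarrow> 'a::topological_space \<Rightarrow> 'b::real_normed_field"
  assumes "finite A" "\<And>i. i \<in> A \<Longrightarrow> continuous_on S (c i)"
  shows "continuous_on S (\<lambda>x. coeff (\<Prod>i\<in>A. [:c i x, 1:]) k)"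
  using assms
proof (induction A arbitrary: k rule: finite_induct)
  case empty
  then show ?case by (cases k) auto
next
  case (insert a A)
  have "continuous_on S (\<lambda>x. c a x * coeff (\<Prod>i\<in>A. [:c i x, 1:]) k +
      (if k = 0 then 0 else coeff (\<Prod>i\<in>A. [:c i x, 1:]) (k - 1)))"
    using insert by (cases k) (auto intro!: continuous_intros)
  with insert.hyps show ?case
    by (simp del: mult_pCons_left add: coeff_monic_linear_mult)
qed

lemma continuous_on_psi_vec: "continuous_on S (psi_vec n)"
proof (rule continuous_on_coordinatewise_then_product)
  fix k
  have "continuous_on S (barycenter n)"
    unfolding barycenter_def divide_inverse by (intro continuous_intros)
  then have "continuous_on S (\<lambda>z. coeff (centered_poly n z) k)"
    unfolding centered_poly_def by (intro continuous_on_coeff_prod_monic_linear continuous_intros) auto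
  then show "continuous_on S (\<lambda>z. psi_vec n z k)"
    unfolding psi_vec_eq_coeff_centered_poly by (cases "k < n - 1") auto
qed

lemma continuous_on_wp_scale [continuous_intros]:
  assumes "continuous_on S t" "continuous_on S b"
  shows "continuous_on S (\<lambda>x. wp_scale n (t x) (b x))"
proof (rule continuous_on_coordinatewise_then_product)
  fix k
  show "continuous_on S (\<lambda>x. wp_scale n (t x) (b x) k)"
    unfolding wp_scale_def
    using assms continuous_on_product_then_coordinatewise[OF assms(2)]
    by (cases "k < n - 1") (auto intro!: continuous_intros)
qed

definition wp_norm :: "nat \<Rightarrow> (nat \<Rightarrow> complex) \<Rightarrow> real" where
  "wp_norm n b = (\<Sum>k<n - 1. root (n - k) (cmod (b k)))"

definition wp_normalize :: "nat \<Rightarrow> (nat \<Rightarrow> complex) \<Rightarrow> nat \<Rightarrow> complex" where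
  "wp_normalize n b = wp_scale n (complex_of_real (1 / wp_norm n b)) b"

lemma wp_norm_scale: "wp_norm n (wp_scale n t b) = cmod t * wp_norm n b"
proof -
  have "root (n - k) (cmod (t ^ (n - k) * b k)) = cmod t * root (n - k) (cmod (b k))" if "k < n - 1" for k
    using that by (simp add: norm_mult norm_power real_root_mult real_root_power_cancel)
  then show ?thesis
    unfolding wp_norm_def wp_scale_def by (simp add: sum_distrib_left)
qed

lemma wp_norm_pos:
  assumes "b \<in> wp_carrier n"
  shows "wp_norm n b > 0"
proof -
  obtain k where k: "b k \<noteq> 0" "k < n - 1"
    using assms by (auto simp: wp_carrier_def) (metis not_le)
  then have "0 < root (n - k) (cmod (b k))"
    by (intro real_root_gt_zero) auto
  also have "\<dots> \<le> wp_norm n b"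
    unfolding wp_norm_def using k by (intro member_le_sum real_root_ge_zero) auto
  finally show ?thesis .
qed

lemma continuous_on_wp_normalize: "continuous_on (wp_carrier n) (wp_normalize n)"
proof -
  have "continuous_on (wp_carrier n) (wp_norm n)"
    unfolding wp_norm_def by (intro continuous_intros)
  then show ?thesis
    unfolding wp_normalize_def
    by (intro continuous_on_wp_scale continuous_on_id continuous_intros) (auto dest: wp_norm_pos)
qed

lemma wp_normalize_scale:
  assumes "b \<in> wp_carrier n" "t \<noteq> 0"
  shows "wp_normalize n (wp_scale n t b) = wp_scale n (t / cmod t) (wp_normalize n b)"
proof -
  have "complex_of_real (1 / (cmod t * wp_norm n b)) * t = t / cmod t * complex_of_real (1 / wp_norm n b)"
    by (simp add: field_simps)
  then show ?thesis
    unfolding wp_normalize_def wp_norm_scale wp_scale_mult by simp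
qed

lemma wp_scale_wp_norm_wp_normalize:
  assumes "b \<in> wp_carrier n"
  shows "wp_scale n (wp_norm n b) (wp_normalize n b) = b"
  using wp_norm_pos[OF assms] wp_scale_one[OF assms]
  by (simp add: wp_normalize_def wp_scale_mult)

text \<open>Normalising turns the saturation into the preimage of the compact \<open>S\<^sup>1\<close>-saturation of
  the normalised set.\<close>
lemma closedin_wp_rel_Image:
  assumes "compact C" "C \<subseteq> wp_carrier n"
  shows "closedin (top_of_set (wp_carrier n)) (wp_rel n `` C)"
proof -
  define K where "K = (\<lambda>(u, c). wp_scale n u (wp_normalize n c)) ` (sphere 0 1 \<times> C)"
  have "continuous_on (sphere 0 1 \<times> C) (\<lambda>(u, c). wp_scale n u (wp_normalize n c))"
    unfolding case_prod_unfold
    using continuous_on_subset[OF continuous_on_wp_normalize] assms(2)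
    by (intro continuous_intros continuous_on_compose2[OF continuous_on_wp_normalize]) auto
  then have "compact K"
    unfolding K_def using assms(1) by (intro compact_continuous_image compact_Times) auto
  moreover have "wp_rel n `` C = wp_carrier n \<inter> wp_normalize n -` K"
  proof (intro equalityI subsetI)
    fix b
    assume "b \<in> wp_rel n `` C"
    then obtain c t where c: "c \<in> C" "t \<noteq> 0" "b = wp_scale n t c"
      by (auto simp: wp_rel_iff_scale)
    then have "wp_normalize n b = wp_scale n (t / cmod t) (wp_normalize n c)"
      using wp_normalize_scale assms(2) by auto
    moreover have "t / cmod t \<in> sphere 0 1"
      using c(2) by (simp add: norm_divide)
    ultimately show "b \<in> wp_carrier n \<inter> wp_normalize n -` K"
      using c assms(2) wp_scale_in_wp_carrier unfolding K_def by auto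
  next
    fix b
    assume "b \<in> wp_carrier n \<inter> wp_normalize n -` K"
    then obtain u c where b: "b \<in> wp_carrier n" and uc: "cmod u = 1" "c \<in> C"
      and "wp_normalize n b = wp_scale n u (wp_normalize n c)"
      unfolding K_def by auto
    then have "b = wp_scale n (wp_norm n b * u * (1 / wp_norm n c)) c"
      using wp_scale_wp_norm_wp_normalize[OF b]
      by (simp add: wp_normalize_def wp_scale_mult mult.assoc)
    moreover have "wp_norm n b * u * (1 / wp_norm n c) \<noteq> 0"
      using wp_norm_pos[OF b] wp_norm_pos[of c n] uc assms(2) by auto
    ultimately have "(c, b) \<in> wp_rel n"
      using uc assms(2) unfolding wp_rel_iff_scale by blast
    then show "b \<in> wp_rel n `` C"
      using uc(2) by blast
  qed
  ultimately show ?thesis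
    by (simp add: compact_imp_closed continuous_closedin_preimage continuous_on_wp_normalize)
qed

section \<open>Normalised configurations\<close>

definition centered_sphere :: "nat \<Rightarrow> (nat \<Rightarrow> complex) set" where
  "centered_sphere n =
     {z. (\<forall>k\<ge>n. z k = 0) \<and> (\<Sum>i<n. z i) = 0 \<and> (\<Sum>i<n. (cmod (z i))\<^sup>2) = 1}"

lemma compact_centered_sphere: "compact (centered_sphere n)"
proof -
  define B where "B = (\<Pi>\<^sub>E k\<in>UNIV. if k < n then cball (0::complex) 1 else {0})"
  have "compactin (product_topology (\<lambda>_. euclidean) UNIV) B"
    unfolding B_def compactin_PiE by auto
  then have "compact B"
    by (simp add: euclidean_product_topology)
  moreover have "closed {z::nat \<Rightarrow> complex. (\<Sum>i<n. z i) = 0 \<and> (\<Sum>i<n. (cmod (z i))\<^sup>2) = 1}"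
    by (intro closed_Collect_conj closed_Collect_eq continuous_intros)
  moreover have "centered_sphere n = B \<inter> {z. (\<Sum>i<n. z i) = 0 \<and> (\<Sum>i<n. (cmod (z i))\<^sup>2) = 1}"
  proof -
    have "cmod (z k) \<le> 1" if "(\<Sum>i<n. (cmod (z i))\<^sup>2) = 1" "k < n" for z :: "nat \<Rightarrow> complex" and k
    proof -
      have "(cmod (z k))\<^sup>2 \<le> 1\<^sup>2"
        using that member_le_sum[of k "{..<n}" "\<lambda>i. (cmod (z i))\<^sup>2"] by simp
      then show ?thesis
        by (rule power2_le_imp_le) simp
    qed
    then show ?thesis
      unfolding centered_sphere_def B_def by (auto simp: PiE_def Pi_def not_le)
  qed
  ultimately show ?thesis
    by (simp add: compact_Int_closed)
qed

lemma psi_vec_centered_sphere_in_wp_carrier: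
  assumes "n > 0" "z \<in> centered_sphere n"
  shows "psi_vec n z \<in> wp_carrier n"
proof -
  have "barycenter n z = 0"
    using assms(2) by (simp add: centered_sphere_def barycenter_def)
  moreover have "\<exists>i<n. z i \<noteq> 0"
  proof (rule ccontr)
    assume "\<not> (\<exists>i<n. z i \<noteq> 0)"
    then have "(\<Sum>i<n. (cmod (z i))\<^sup>2) = 0"
      by simp
    with assms(2) show False
      by (simp add: centered_sphere_def)
  qed
  ultimately show ?thesis
    using psi_vec_in_wp_carrier[OF assms(1)] by metis
qed

lemma M_rel_centered_sphere:
  assumes "n \<ge> 2" "z \<in> conf n"
  obtains z' where "z' \<in> centered_sphere n" "(z, z') \<in> M_rel n"
proof -
  define B where "B = barycenter n z"
  define r where "r = sqrt (\<Sum>i<n. (cmod (z i - B))\<^sup>2)"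
  define z' where "z' i = (if i < n then (z i - B) / r else 0)" for i
  obtain i0 where "i0 < n" "z i0 \<noteq> B"
    using conf_nonconstant[OF assms] B_def by metis
  then have pos: "0 < (\<Sum>i<n. (cmod (z i - B))\<^sup>2)"
    by (intro sum_pos2[of _ i0]) auto
  then have r: "r > 0" "r\<^sup>2 = (\<Sum>i<n. (cmod (z i - B))\<^sup>2)"
    unfolding r_def by simp_all
  have z'_affine: "z' i = (1 / r) * z (id i) + (- B / r)" if "i < n" for i
    using that by (simp add: z'_def diff_divide_distrib)
  have "z' \<in> conf n"
    using assms(2) r(1) by (auto simp: conf_def z'_def inj_on_def)
  then have "(z, z') \<in> M_rel n"
    using assms(2) r(1) z'_affine
    by (intro M_relI[where \<sigma> = id and l = "1 / r" and m = "- B / r"]) auto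
  moreover have "z' \<in> centered_sphere n"
  proof -
    have "(\<Sum>i<n. z' i) = (\<Sum>i<n. z i - B) / r"
      by (simp add: z'_def sum_divide_distrib)
    also have "(\<Sum>i<n. z i - B) = 0"
      using sum_barycenter_diff[of n z] assms(1) by (simp add: B_def sum_negf[symmetric] sum_subtractf)
    moreover have "(\<Sum>i<n. (cmod (z' i))\<^sup>2) = (\<Sum>i<n. (cmod (z i - B))\<^sup>2) / r\<^sup>2"
      by (simp add: z'_def norm_divide power_divide sum_divide_distrib)
    ultimately show ?thesis
      using r pos by (simp add: centered_sphere_def z'_def)
  qed
  ultimately show ?thesis
    using that by blast
qed

lemma compact_centered_sphere_diff:
  assumes "openin (top_of_set (conf n)) U"
  shows "compact (centered_sphere n - U)"
proof -
  obtain G where "open G" "U = conf n \<inter> G"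
    using assms by (auto simp: openin_open)
  define D where "D = (\<Union>i<n. \<Union>j\<in>{..<n} - {i}. {z::nat \<Rightarrow> complex. z i = z j})"
  have "closed D"
    unfolding D_def by (intro closed_UN ballI closed_Collect_eq continuous_intros) auto
  moreover have "centered_sphere n - U = centered_sphere n \<inter> (- G \<union> D)"
    unfolding \<open>U = conf n \<inter> G\<close> D_def centered_sphere_def conf_def inj_on_def by auto
  ultimately show ?thesis
    using \<open>open G\<close> compact_centered_sphere by (simp add: closed_Compl closed_Un compact_Int_closed)
qed

text \<open>The compact set \<open>centered_sphere n - U\<close> contains tuples with collisions; this is why
  \<open>M_rel_if_wp_rel_psi_vec\<close> only requires \<open>w\<close> to be a configuration.\<close>
lemma saturated_open_conf_eq_preimage:
  assumes "n \<ge> 2" "openin (top_of_set (conf n)) U" "M_rel n `` U \<subseteq> U"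
  shows "\<exists>W. openin (top_of_set (wp_carrier n)) W \<and> wp_rel n `` W \<subseteq> W \<and>
    {z \<in> conf n. psi_vec n z \<in> W} = U"
proof -
  define Z where "Z = centered_sphere n - U"
  define W where "W = wp_carrier n - wp_rel n `` (psi_vec n ` Z)"
  have Z_wp: "psi_vec n ` Z \<subseteq> wp_carrier n"
    using psi_vec_centered_sphere_in_wp_carrier assms(1) by (auto simp: Z_def)
  have "compact (psi_vec n ` Z)"
    unfolding Z_def using assms(2)
    by (intro compact_continuous_image compact_centered_sphere_diff continuous_on_psi_vec)
  then have "openin (top_of_set (wp_carrier n)) W"
    unfolding W_def using closedin_wp_rel_Image[OF _ Z_wp] by (simp add: openin_diff)
  moreover have "wp_rel n `` W \<subseteq> W"
    using equiv_wp_rel[of n] unfolding W_def equiv_def sym_def trans_def by blast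
  moreover have "psi_vec n z \<in> W \<longleftrightarrow> z \<in> U" if z: "z \<in> conf n" for z
  proof
    assume "psi_vec n z \<in> W"
    show "z \<in> U"
    proof (rule ccontr)
      assume "z \<notin> U"
      obtain z' where z': "z' \<in> centered_sphere n" "(z, z') \<in> M_rel n"
        using M_rel_centered_sphere[OF assms(1) z] by blast
      then have "z' \<notin> U"
        using assms(3) equiv_M_rel[of n] \<open>z \<notin> U\<close> unfolding equiv_def sym_def by blast
      moreover have "(psi_vec n z', psi_vec n z) \<in> wp_rel n"
        using wp_rel_psi_vec_if_M_rel[OF assms(1)] z'(2) equiv_M_rel[of n]
        unfolding equiv_def sym_def by blast
      ultimately show False
        using \<open>psi_vec n z \<in> W\<close> z'(1) by (auto simp: W_def Z_def)
    qed
  next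
    assume "z \<in> U"
    have "psi_vec n z \<notin> wp_rel n `` (psi_vec n ` Z)"
    proof
      assume "psi_vec n z \<in> wp_rel n `` (psi_vec n ` Z)"
      then obtain z' where "z' \<in> Z" "(psi_vec n z', psi_vec n z) \<in> wp_rel n"
        by blast
      then have "(z', z) \<in> M_rel n"
        using M_rel_if_wp_rel_psi_vec[OF assms(1) _ z] by (auto simp: Z_def centered_sphere_def)
      then show False
        using assms(3) \<open>z \<in> U\<close> \<open>z' \<in> Z\<close> equiv_M_rel[of n] unfolding Z_def equiv_def sym_def by blast
    qed
    then show "psi_vec n z \<in> W"
      using psi_vec_conf_in_wp_carrier[OF assms(1) z] by (simp add: W_def)
  qed
  then have "{z \<in> conf n. psi_vec n z \<in> W} = U"
    using assms(2) openin_imp_subset by fastforce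
  ultimately show ?thesis
    by blast
qed

theorem mainTheorem4:
  fixes n :: nat
  assumes "n \<ge> 2"
  shows "embedding_map (M_top n) (wp_top n) (psi_phi n)"
proof -
  interpret compatible_map "top_of_set (conf n)" "M_rel n" "top_of_set (wp_carrier n)" "wp_rel n" "psi_vec n"
  proof
    show "equiv (topspace (top_of_set (conf n))) (M_rel n)"
      and "equiv (topspace (top_of_set (wp_carrier n))) (wp_rel n)"
      by (simp_all add: equiv_M_rel equiv_wp_rel)
    show "continuous_map (top_of_set (conf n)) (top_of_set (wp_carrier n)) (psi_vec n)"
      using continuous_on_psi_vec psi_vec_conf_in_wp_carrier[OF assms]
      by (auto simp: continuous_map_in_subtopology)
    show "(psi_vec n z, psi_vec n w) \<in> wp_rel n \<longleftrightarrow> (z, w) \<in> M_rel n"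
      if "z \<in> topspace (top_of_set (conf n))" "w \<in> topspace (top_of_set (conf n))" for z w
      using that wp_rel_psi_vec_if_M_rel[OF assms] M_rel_if_wp_rel_psi_vec[OF assms]
      by (auto simp: conf_def)
  qed
  have "psi_phi n = quotient_induced (psi_vec n) (wp_rel n)"
    by (simp add: fun_eq_iff psi_phi_def quotient_induced_def)
  then show ?thesis
    unfolding M_top_def wp_top_def
    using embedding_map_induced saturated_open_conf_eq_preimage[OF assms] by simp
qed

end
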